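(* Let $m$ be a positive integer and $q(x,y)=x^2-xy+y^2$. If the equation $m=q(x,y)$ has a solution $(x,y)\in\mathbb{Z}^2$, then it has a solution $(x',y')$ with $x',y'$ positive integers. *)

theory Defs
  imports Main
begin

definition q :: "int \<Rightarrow> int \<Rightarrow> int" where
  "q x y = x^2 - x*y + y^2"

end

theory Submission
  imports Defs
begin

(* The form q is unchanged by (x, y) \<mapsto> (|x|, |y|) when xy \<ge> 0, and by the
   reflection y \<mapsto> x - y, which turns a representation with xy < 0 into one with
   x(x - y) > 0.  If xy = 0, then q x y = (x + y)^2 = q s s for s = |x + y|. *)

lemma q_abs_abs: "0 \<le> x * y \<Longrightarrow> q \<bar>x\<bar> \<bar>y\<bar> = q x y"
  by (simp add: q_def abs_mult [symmetric])

lemma q_reflect: "q x (x - y) = q x y"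
  by (simp add: q_def power2_eq_square algebra_simps)

lemma q_diag: "q x x = x^2"
  by (simp add: q_def power2_eq_square)

lemma q_eq_square_if_mult_zero: "x * y = 0 \<Longrightarrow> q x y = (x + y)^2"
  by (auto simp: q_def)

lemma q_pos_pos_if_mult_pos:
  assumes "0 < x * y"
  shows "\<exists>a b. a > 0 \<and> b > 0 \<and> q a b = q x y"
proof (intro exI conjI)
  show "\<bar>x\<bar> > 0" "\<bar>y\<bar> > 0" using assms by (auto simp: zero_less_mult_iff)
  show "q \<bar>x\<bar> \<bar>y\<bar> = q x y" using assms by (simp add: q_abs_abs)
qed

theorem mainTheorem7:
  fixes m :: int
  assumes "m > 0"
    and "\<exists>x y :: int. m = q x y"
  shows "\<exists>x' y' :: int. x' > 0 \<and> y' > 0 \<and> m = q x' y'"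
proof -
  obtain x y :: int where m: "m = q x y" using assms(2) by blast
  consider "0 < x * y" | "x * y < 0" | "x * y = 0" by linarith
  then show ?thesis
  proof cases
    case 1
    then show ?thesis using m q_pos_pos_if_mult_pos by metis
  next
    case 2
    then have "0 < x * (x - y)"
      using zero_le_square [of x] by (simp add: right_diff_distrib del: zero_le_square)
    then show ?thesis using m q_pos_pos_if_mult_pos q_reflect by metis
  next
    case 3
    then have m_sq: "m = (x + y)^2" using m q_eq_square_if_mult_zero by simp
    with assms(1) have "\<bar>x + y\<bar> > 0" by auto
    moreover have "m = q \<bar>x + y\<bar> \<bar>x + y\<bar>" using m_sq q_diag by simp
    ultimately show ?thesis by blast
  qed
qed

end
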